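(* Consider the HIST algorithm described in the context, suppose Assumptions (A2), (A3), (A4), (A5) and (A6) hold and $\gamma\le\frac1{\sqrt{15}HL}$. Then for every global round $t$, $$Q_t\le5\gamma^2H^2L^2D_t+5\gamma^2NH^2\sum_{e=0}^{E-1}\mathbb E\|\nabla f(\hat x^{t,e})\|^2+2\gamma^2NHE\sigma^2+5\gamma^2NH^2E\delta_2^2+5\gamma^2NH^2E\delta_1^2,$$ where $D_t=\sum_{j=1}^N\sum_{e=0}^{E-1}\mathbb E\|\hat x^{t,e}-\bar x^{t,e}_j\|^2$ and $Q_t=\sum_{j=1}^N\frac1{n_j}\sum_{i\in\mathcal C_j}\frac1H\sum_{e=0}^{E-1}\sum_{h=0}^{H-1}\mathbb E\|\bar x^{t,e}_j-x^{t,e}_{i,h}\|^2$.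
   Context: Hierarchical federated learning: $N$ cells $j=1,\dots,N$; cell $j$ has a set $\mathcal C_j$ of $n_j$ clients (disjoint). Model $x\in\mathbb R^d$. Client $i$ has distribution $\mathcal D_i$, per-sample loss $l(x,\xi)$, $F_i(x)=\mathbb E_{\xi\sim\mathcal D_i}l(x,\xi)$; $f_j=\frac1{n_j}\sum_{i\in\mathcal C_j}F_i$; $f=\frac1N\sum_jf_j$. $\odot$ is the Hadamard product, $\mathbf 1$ the all-ones vector. HIST algorithm (step size $\gamma$, integers $T,E,H\ge1$, initial $\bar x^0$). For each global round $t$: binary masks $p^t_1,\dots,p^t_N\in\{0,1\}^d$ with $p^t_j\odot p^t_{j'}=0$ ($j\ne j'$), $\sum_jp^t_j=\mathbf 1$. Set $\bar x^{t,0}_j=p^t_j\odot\bar x^t$, $x^{t,0}_{i,0}=\bar x^{t,0}_j$ for $i\in\mathcal C_j$. For $e=0,\dots,E-1$: each client $i\in\mathcal C_j$ does $x^{t,e}_{i,h+1}=x^{t,e}_{i,h}-\gamma p^t_j\odot\nabla l(x^{t,e}_{i,h},\xi^{t,e}_{i,h})$, $h=0,\dots,H-1$, with fresh $\xi^{t,e}_{i,h}\sim\mathcal D_i$; then $\bar x^{t,e+1}_j=\frac1{n_j}\sum_{i\in\mathcal C_j}x^{t,e}_{i,H}$ and $x^{t,e+1}_{i,0}=\bar x^{t,e+1}_j$. Finally $\bar x^{t+1}=\sum_j\bar x^{t,E}_j$. Virtual iterates $\hat x^{t,e}=\sum_j\bar x^{t,e}_j$. Expectations are over all randomness. Assumptions.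 (A2) each $F_i$ differentiable, $\|\nabla F_i(x)-\nabla F_i(y)\|\le L\|x-y\|$ and $F_i(y)\le F_i(x)+\langle\nabla F_i(x),y-x\rangle+\frac L2\|y-x\|^2$. (A3) $\mathbb E_{\xi\sim\mathcal D_i}\nabla l(x,\xi)=\nabla F_i(x)$. (A4) $\mathbb E_{\xi\sim\mathcal D_i}\|\nabla l(x,\xi)-\nabla F_i(x)\|^2\le\sigma^2$. (A5) $\frac1N\sum_j\|\nabla f_j(x)-\nabla f(x)\|^2\le\delta_1^2$. (A6) $\frac1{n_j}\sum_{i\in\mathcal C_j}\|\nabla F_i(x)-\nabla f_j(x)\|^2\le\delta_2^2$; all for every $x,i,j$. *)

theory Defs
  imports "HOL-Probability.Probability"
begin

text \<open>Hadamard product on real^'d is the componentwise product (*) of the vec type;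
  the all-ones vector is 1.\<close>

text \<open>Local SGD steps of one client within one cell-round:
  m = mask p_j, s h = sample xi_{i,h}^{t,e}, y = starting point x_{i,0}^{t,e}.\<close>
primrec hist_loc ::
  "(real^'d \<Rightarrow> 'b \<Rightarrow> real^'d) \<Rightarrow> real \<Rightarrow> real^'d \<Rightarrow> (nat \<Rightarrow> 'b) \<Rightarrow> real^'d \<Rightarrow> nat \<Rightarrow> real^'d"
where
  "hist_loc g \<gamma> m s y 0 = y"
| "hist_loc g \<gamma> m s y (Suc h) =
     hist_loc g \<gamma> m s y h - \<gamma> *\<^sub>R (m * g (hist_loc g \<gamma> m s y h) (s h))"

primrec hist_bar ::
  "(real^'d \<Rightarrow> 'b \<Rightarrow> real^'d) \<Rightarrow> real \<Rightarrow> nat \<Rightarrow> (nat \<Rightarrow> nat set) \<Rightarrow> (nat \<Rightarrow> real^'d)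
    \<Rightarrow> (nat \<Rightarrow> nat \<Rightarrow> nat \<Rightarrow> 'b) \<Rightarrow> real^'d \<Rightarrow> nat \<Rightarrow> nat \<Rightarrow> real^'d"
where
  "hist_bar g \<gamma> H C p \<xi> x0 0 j = p j * x0"
| "hist_bar g \<gamma> H C p \<xi> x0 (Suc e) j =
     (1 / real (card (C j))) *\<^sub>R
       (\<Sum>i\<in>C j. hist_loc g \<gamma> (p j) (\<xi> i e) (hist_bar g \<gamma> H C p \<xi> x0 e j) H)"

definition hist_x ::
  "(real^'d \<Rightarrow> 'b \<Rightarrow> real^'d) \<Rightarrow> real \<Rightarrow> nat \<Rightarrow> (nat \<Rightarrow> nat set) \<Rightarrow> (nat \<Rightarrow> real^'d)
    \<Rightarrow> (nat \<Rightarrow> nat \<Rightarrow> nat \<Rightarrow> 'b) \<Rightarrow> real^'d \<Rightarrow> nat \<Rightarrow> nat \<Rightarrow> nat \<Rightarrow> nat \<Rightarrow> real^'d"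
where
  "hist_x g \<gamma> H C p \<xi> x0 j i e h = hist_loc g \<gamma> (p j) (\<xi> i e) (hist_bar g \<gamma> H C p \<xi> x0 e j) h"

definition hist_hat ::
  "(real^'d \<Rightarrow> 'b \<Rightarrow> real^'d) \<Rightarrow> real \<Rightarrow> nat \<Rightarrow> (nat \<Rightarrow> nat set) \<Rightarrow> (nat \<Rightarrow> real^'d)
    \<Rightarrow> (nat \<Rightarrow> nat \<Rightarrow> nat \<Rightarrow> 'b) \<Rightarrow> real^'d \<Rightarrow> nat \<Rightarrow> nat \<Rightarrow> real^'d"
where
  "hist_hat g \<gamma> H C p \<xi> x0 N e = (\<Sum>j\<in>{1..N}. hist_bar g \<gamma> H C p \<xi> x0 e j)"

definition grad_fj :: "(nat \<Rightarrow> real^'d \<Rightarrow> real^'d) \<Rightarrow> (nat \<Rightarrow> nat set) \<Rightarrow> nat \<Rightarrow> real^'d \<Rightarrow> real^'d"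
  where "grad_fj gF C j x = (1 / real (card (C j))) *\<^sub>R (\<Sum>i\<in>C j. gF i x)"

definition grad_f :: "(nat \<Rightarrow> real^'d \<Rightarrow> real^'d) \<Rightarrow> (nat \<Rightarrow> nat set) \<Rightarrow> nat \<Rightarrow> real^'d \<Rightarrow> real^'d"
  where "grad_f gF C N x = (1 / real N) *\<^sub>R (\<Sum>j\<in>{1..N}. grad_fj gF C j x)"

end

theory Submission
  imports Defs
begin

(* Unrolling the masked local SGD steps writes
   xbar_j - x_{i,h} as gamma times the sum of the first h masked stochastic gradients.  Their
   centred parts form a martingale: the sample of step k is drawn after, and independently of,
   the iterate x_{i,k} it is evaluated at, so the noise sum has second moment at most h sigma^2.
   By L-smoothness the true gradient at x_{i,k} is bounded through |xbar_j - x_{i,k}|,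
   |xhat - xbar_j| and |grad F_i(xhat)|.  This gives a discrete Gronwall inequality for
   r_h = E|xbar_j - x_{i,h}|^2 which, since 15 gamma^2 H^2 L^2 <= 1, forces r_h to grow only
   linearly in h.  Averaging over h, clients and cells, two bias-variance decompositions bound the
   cell averages of |grad F_i(xhat)|^2 by |grad f(xhat)|^2 + delta_1^2 + delta_2^2. *)

definition binary_mask :: "real^'d \<Rightarrow> bool"
  where "binary_mask m \<longleftrightarrow> (\<forall>k. m $ k \<in> {0, 1})"

lemma norm_mult_binary_mask_le:
  assumes "binary_mask m"
  shows "norm (m * v) \<le> norm v"
proof (rule norm_le_componentwise_cart)
  fix k
  have "m $ k = 0 \<or> m $ k = 1" using assms by (auto simp: binary_mask_def)
  then show "norm ((m * v) $ k) \<le> norm (v $ k)" by auto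
qed

lemma inner_mult_vec_swap:
  fixes m a b :: "real^'d"
  shows "a \<bullet> (m * b) = (m * a) \<bullet> b"
  by (simp add: inner_vec_def algebra_simps)

lemma borel_measurable_mult_vec [measurable (raw)]:
  fixes f g :: "'a \<Rightarrow> real^'d"
  assumes "f \<in> borel_measurable M" "g \<in> borel_measurable M"
  shows "(\<lambda>x. f x * g x) \<in> borel_measurable M"
proof -
  have "(\<lambda>x :: (real^'d) \<times> (real^'d). fst x * snd x) = (\<lambda>x. \<chi> k. fst x $ k * snd x $ k)"
    by (auto simp: vec_eq_iff)
  then have "continuous_on UNIV (\<lambda>x :: (real^'d) \<times> (real^'d). fst x * snd x)"
    by (simp only:) (intro continuous_intros)
  with assms show ?thesis by (rule borel_measurable_continuous_Pair)
qed

lemma ennreal_mult_le: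
  assumes "0 \<le> a" "0 \<le> b" "a * b \<le> c"
  shows "ennreal a * ennreal b \<le> ennreal c"
  using assms by (metis ennreal_leI ennreal_mult)

lemma norm_add_power2_le:
  fixes a b :: "'a::real_normed_vector"
  shows "(norm (a + b))\<^sup>2 \<le> 2 * (norm a)\<^sup>2 + 2 * (norm b)\<^sup>2"
proof -
  have "(norm (a + b))\<^sup>2 \<le> (norm a + norm b)\<^sup>2"
    by (intro power_mono norm_triangle_ineq) auto
  also have "\<dots> \<le> 2 * (norm a)\<^sup>2 + 2 * (norm b)\<^sup>2"
    using zero_le_power2[of "norm a - norm b"] by (simp add: power2_eq_square algebra_simps)
  finally show ?thesis .
qed

lemma power2_add3_le: "(a + b + c)\<^sup>2 \<le> 3 * (a\<^sup>2 + b\<^sup>2 + (c::real)\<^sup>2)"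
  using sum_squared_le_sum_of_squares[of "\<lambda>k. [a, b, c] ! k" "{..<3}"]
  by (simp add: numeral_3_eq_3 lessThan_Suc algebra_simps)

lemma norm_sum_power2_le:
  fixes v :: "'i \<Rightarrow> 'a::real_normed_vector"
  shows "(norm (\<Sum>k\<in>A. v k))\<^sup>2 \<le> real (card A) * (\<Sum>k\<in>A. (norm (v k))\<^sup>2)"
proof -
  have "(norm (\<Sum>k\<in>A. v k))\<^sup>2 \<le> (\<Sum>k\<in>A. norm (v k))\<^sup>2"
    by (intro power_mono norm_sum) auto
  also have "\<dots> \<le> real (card A) * (\<Sum>k\<in>A. (norm (v k))\<^sup>2)"
    using sum_squared_le_sum_of_squares[of "\<lambda>k. norm (v k)" A] by (simp add: mult.commute)
  finally show ?thesis .
qed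

lemma double_sum_lessThan_le: "2 * (\<Sum>k<n. real k) \<le> (real n)\<^sup>2"
  by (induction n) (simp_all add: power2_eq_square algebra_simps)

lemma sum_power2_norm_eq_mean:
  fixes v :: "'i \<Rightarrow> 'a::real_inner"
  assumes "finite A" "A \<noteq> {}"
  defines "\<mu> \<equiv> (1 / real (card A)) *\<^sub>R (\<Sum>i\<in>A. v i)"
  shows "(\<Sum>i\<in>A. (norm (v i))\<^sup>2) = real (card A) * (norm \<mu>)\<^sup>2 + (\<Sum>i\<in>A. (norm (v i - \<mu>))\<^sup>2)"
proof -
  have sum_v: "(\<Sum>i\<in>A. v i) = real (card A) *\<^sub>R \<mu>"
    using assms by (simp add: \<mu>_def card_gt_0_iff)
  have "(\<Sum>i\<in>A. (norm (v i - \<mu>))\<^sup>2) = (\<Sum>i\<in>A. (norm (v i))\<^sup>2 - 2 * (v i \<bullet> \<mu>) + (norm \<mu>)\<^sup>2)"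
    by (simp add: power2_norm_eq_inner inner_diff_left inner_diff_right inner_commute algebra_simps)
  also have "\<dots> = (\<Sum>i\<in>A. (norm (v i))\<^sup>2) - 2 * ((\<Sum>i\<in>A. v i) \<bullet> \<mu>) + real (card A) * (norm \<mu>)\<^sup>2"
    by (simp add: sum.distrib sum_subtractf inner_sum_left sum_distrib_left)
  also have "(\<Sum>i\<in>A. v i) \<bullet> \<mu> = real (card A) * (norm \<mu>)\<^sup>2"
    by (simp add: sum_v power2_norm_eq_inner)
  finally show ?thesis by simp
qed

lemma sum_cell_mean_power2_grad_le:
  assumes N: "N \<ge> 1"
    and C: "\<And>j. j \<in> {1..N} \<Longrightarrow> finite (C j) \<and> C j \<noteq> {}"
    and het_cells: "(1 / real N) * (\<Sum>j\<in>{1..N}. (norm (grad_fj gF C j x - grad_f gF C N x))\<^sup>2) \<le> \<delta>\<^sub>1\<^sup>2"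
    and het_clients: "\<And>j. j \<in> {1..N} \<Longrightarrow>
       (1 / real (card (C j))) * (\<Sum>i\<in>C j. (norm (gF i x - grad_fj gF C j x))\<^sup>2) \<le> \<delta>\<^sub>2\<^sup>2"
  shows "(\<Sum>j\<in>{1..N}. (1 / real (card (C j))) * (\<Sum>i\<in>C j. (norm (gF i x))\<^sup>2))
     \<le> real N * (norm (grad_f gF C N x))\<^sup>2 + real N * (\<delta>\<^sub>1\<^sup>2 + \<delta>\<^sub>2\<^sup>2)"
proof -
  have cell: "(1 / real (card (C j))) * (\<Sum>i\<in>C j. (norm (gF i x))\<^sup>2) \<le> (norm (grad_fj gF C j x))\<^sup>2 + \<delta>\<^sub>2\<^sup>2"
    if j: "j \<in> {1..N}" for j
  proof -
    have "card (C j) > 0" using C[OF j] by (simp add: card_gt_0_iff)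
    moreover have "(\<Sum>i\<in>C j. (norm (gF i x))\<^sup>2) = real (card (C j)) * (norm (grad_fj gF C j x))\<^sup>2
        + (\<Sum>i\<in>C j. (norm (gF i x - grad_fj gF C j x))\<^sup>2)"
      unfolding grad_fj_def using C[OF j] by (intro sum_power2_norm_eq_mean) auto
    ultimately show ?thesis using het_clients[OF j] by (simp add: field_simps)
  qed
  have "(\<Sum>j\<in>{1..N}. (norm (grad_fj gF C j x))\<^sup>2) = real N * (norm (grad_f gF C N x))\<^sup>2
      + (\<Sum>j\<in>{1..N}. (norm (grad_fj gF C j x - grad_f gF C N x))\<^sup>2)"
    unfolding grad_f_def using N by (subst sum_power2_norm_eq_mean) auto
  moreover have "(\<Sum>j\<in>{1..N}. (norm (grad_fj gF C j x - grad_f gF C N x))\<^sup>2) \<le> real N * \<delta>\<^sub>1\<^sup>2"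
    using het_cells N by (simp add: field_simps)
  moreover have "(\<Sum>j\<in>{1..N}. (1 / real (card (C j))) * (\<Sum>i\<in>C j. (norm (gF i x))\<^sup>2))
      \<le> (\<Sum>j\<in>{1..N}. (norm (grad_fj gF C j x))\<^sup>2) + real N * \<delta>\<^sub>2\<^sup>2"
  proof -
    have "(\<Sum>j\<in>{1..N}. (1 / real (card (C j))) * (\<Sum>i\<in>C j. (norm (gF i x))\<^sup>2))
        \<le> (\<Sum>j\<in>{1..N}. (norm (grad_fj gF C j x))\<^sup>2 + \<delta>\<^sub>2\<^sup>2)"
      by (rule sum_mono) (rule cell)
    then show ?thesis by (simp add: sum.distrib)
  qed
  ultimately show ?thesis by (simp add: algebra_simps)
qed

lemma linear_bound_of_recursion:
  fixes r :: "nat \<Rightarrow> ennreal" and c :: ennreal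
  assumes \<beta>: "0 \<le> \<beta>" "5 * \<beta> * (real H)\<^sup>2 \<le> 2"
    and rec: "\<And>h. h \<le> H \<Longrightarrow> r h \<le> of_nat h * c + ennreal (\<beta> * real h) * (\<Sum>k<h. r k)"
  shows "h \<le> H \<Longrightarrow> r h \<le> ennreal (5 / 4 * real h) * c"
proof (induction h rule: less_induct)
  case (less h)
  have scale: "ennreal (\<beta> * real h) * (ennreal a * c) = ennreal (\<beta> * real h * a) * c" for a
    using \<beta> by (simp add: ennreal_mult' mult.assoc)
  have "(\<Sum>k<h. r k) \<le> (\<Sum>k<h. ennreal (5 / 4 * real k) * c)"
    using less by (intro sum_mono) auto
  also have "\<dots> = ennreal (5 / 4 * (\<Sum>k<h. real k)) * c"
    by (simp add: sum_distrib_right[symmetric] sum_distrib_left)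
  finally have "r h \<le> of_nat h * c + ennreal (\<beta> * real h) * (ennreal (5 / 4 * (\<Sum>k<h. real k)) * c)"
    using rec[OF less.prems] by (meson add_left_mono mult_left_mono order_trans zero_le)
  also have "\<dots> = of_nat h * c + ennreal (\<beta> * real h * (5 / 4 * (\<Sum>k<h. real k))) * c"
    by (simp only: scale)
  also have "\<dots> \<le> of_nat h * c + ennreal (real h / 4) * c"
  proof -
    have "5 * (\<Sum>k<h. real k) \<le> 5 / 2 * (real H)\<^sup>2"
    proof -
      have "(real h)\<^sup>2 \<le> (real H)\<^sup>2" using less.prems by (simp add: power_mono)
      then show ?thesis using double_sum_lessThan_le[of h] by linarith
    qed
    then have "\<beta> * real h * (5 / 4 * (\<Sum>k<h. real k)) \<le> real h * (5 * \<beta> * (real H)\<^sup>2) / 8"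
      using \<beta> by (simp add: mult_left_mono algebra_simps)
    also have "\<dots> \<le> real h / 4"
      using mult_left_mono[OF \<beta>(2), of "real h"] by (simp add: algebra_simps)
    finally show ?thesis by (intro add_left_mono mult_right_mono ennreal_leI) auto
  qed
  also have "\<dots> = ennreal (5 / 4 * real h) * c"
    by (simp add: ennreal_of_nat_eq_real_of_nat distrib_right[symmetric] ennreal_plus[symmetric])
  finally show ?case .
qed

lemma mean_bound_of_recursion:
  fixes r :: "nat \<Rightarrow> ennreal" and c :: ennreal
  assumes \<beta>: "0 \<le> \<beta>" "5 * \<beta> * (real H)\<^sup>2 \<le> 2"
    and rec: "\<And>h. h \<le> H \<Longrightarrow> r h \<le> of_nat h * c + ennreal (\<beta> * real h) * (\<Sum>k<h. r k)"
  shows "ennreal (1 / real H) * (\<Sum>h<H. r h) \<le> ennreal (5 / 8 * real H) * c"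
proof -
  have "(\<Sum>h<H. r h) \<le> (\<Sum>h<H. ennreal (5 / 4 * real h) * c)"
    using linear_bound_of_recursion[OF assms] by (intro sum_mono) auto
  also have "\<dots> = ennreal (5 / 4 * (\<Sum>h<H. real h)) * c"
    by (simp add: sum_distrib_right[symmetric] sum_distrib_left)
  finally have "ennreal (1 / real H) * (\<Sum>h<H. r h)
      \<le> ennreal (1 / real H) * ennreal (5 / 4 * (\<Sum>h<H. real h)) * c"
    by (metis mult_left_mono mult.assoc zero_le)
  also have "ennreal (1 / real H) * ennreal (5 / 4 * (\<Sum>h<H. real h)) * c
      = ennreal (5 / 4 * (\<Sum>h<H. real h) / real H) * c"
    by (subst ennreal_mult[symmetric]) (simp_all add: sum_nonneg ac_simps)
  also have "\<dots> \<le> ennreal (5 / 8 * real H) * c"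
  proof (intro mult_right_mono ennreal_leI)
    show "5 / 4 * (\<Sum>h<H. real h) / real H \<le> 5 / 8 * real H"
      using double_sum_lessThan_le[of H]
      by (cases "H = 0") (simp_all add: divide_le_eq power2_eq_square)
  qed simp
  finally show ?thesis .
qed

lemma nn_integral_norm_add_masked_noise_le:
  fixes v :: "'b \<Rightarrow> real^'d"
  assumes Q: "prob_space Q" and m: "binary_mask m"
    and v: "integrable Q v" "(\<integral>z. v z \<partial>Q) = 0"
    and var: "(\<integral>\<^sup>+z. ennreal ((norm (v z))\<^sup>2) \<partial>Q) \<le> ennreal (\<sigma>\<^sup>2)"
  shows "(\<integral>\<^sup>+z. ennreal ((norm (S + m * v z))\<^sup>2) \<partial>Q) \<le> ennreal ((norm S)\<^sup>2 + \<sigma>\<^sup>2)"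
proof -
  interpret Q: prob_space Q by (fact Q)
  have v_meas[measurable]: "v \<in> borel_measurable Q" using v by auto
  have v2_int: "integrable Q (\<lambda>z. (norm (v z))\<^sup>2)"
    by (rule integrableI_bounded) (use var in \<open>auto simp: top.not_eq_extremum intro: le_less_trans\<close>)
  have v2_le: "(\<integral>z. (norm (v z))\<^sup>2 \<partial>Q) \<le> \<sigma>\<^sup>2"
    using var by (simp add: nn_integral_eq_integral[OF v2_int] ennreal_le_iff)
  define F where "F z = (norm S)\<^sup>2 + 2 * ((m * S) \<bullet> v z) + (norm (v z))\<^sup>2" for z
  have pointwise: "(norm (S + m * v z))\<^sup>2 \<le> F z" for z
  proof -
    have "(norm (S + m * v z))\<^sup>2 = (norm S)\<^sup>2 + 2 * (S \<bullet> (m * v z)) + (norm (m * v z))\<^sup>2"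
      by (simp add: power2_norm_eq_inner inner_add_left inner_add_right inner_commute)
    also have "S \<bullet> (m * v z) = (m * S) \<bullet> v z" by (rule inner_mult_vec_swap)
    also have "(norm (m * v z))\<^sup>2 \<le> (norm (v z))\<^sup>2"
      using norm_mult_binary_mask_le[OF m] by (simp add: power_mono)
    finally show ?thesis unfolding F_def by simp
  qed
  have F_int: "integrable Q F" unfolding F_def using v v2_int by auto
  have "(\<integral>\<^sup>+z. ennreal ((norm (S + m * v z))\<^sup>2) \<partial>Q) \<le> (\<integral>\<^sup>+z. ennreal (F z) \<partial>Q)"
    by (intro nn_integral_mono ennreal_leI pointwise)
  also have "\<dots> = ennreal (\<integral>z. F z \<partial>Q)"
    using F_int pointwise order_trans[OF zero_le_power2] by (intro nn_integral_eq_integral) auto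
  also have "(\<integral>z. F z \<partial>Q) = (norm S)\<^sup>2 + (\<integral>z. (norm (v z))\<^sup>2 \<partial>Q)"
    unfolding F_def using v v2_int by (simp add: Q.prob_space)
  also have "\<dots> \<le> (norm S)\<^sup>2 + \<sigma>\<^sup>2" using v2_le by simp
  finally show ?thesis by (simp add: ennreal_leI order_trans)
qed

lemma nn_integral_fresh_coordinate:
  fixes P0 :: "'a measure" and D :: "'i \<Rightarrow> 'b measure"
  assumes I: "finite I" "k \<in> I" and D: "\<And>i. i \<in> I \<Longrightarrow> prob_space (D i)"
    and f: "case_prod f \<in> borel_measurable ((P0 \<Otimes>\<^sub>M Pi\<^sub>M I D) \<Otimes>\<^sub>M D k)"
    and f_indep: "\<And>u s z z'. f (u, s(k := z')) z = f (u, s) z"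
  shows "(\<integral>\<^sup>+\<omega>. f \<omega> (snd \<omega> k) \<partial>(P0 \<Otimes>\<^sub>M Pi\<^sub>M I D))
    = (\<integral>\<^sup>+\<omega>. \<integral>\<^sup>+z. f \<omega> z \<partial>D k \<partial>(P0 \<Otimes>\<^sub>M Pi\<^sub>M I D))"
proof -
  \<comment> \<open>Pad \<open>D\<close> by one-point spaces outside \<open>I\<close> to obtain a product of probability spaces.\<close>
  define D' where "D' i = (if i \<in> I then D i else count_space {undefined})" for i
  have D'_prob: "prob_space (D' i)" for i
    using D by (auto simp: D'_def intro: prob_spaceI)
  interpret product_sigma_finite D'
    unfolding product_sigma_finite_def using D'_prob prob_space_imp_sigma_finite by blast
  interpret Pi: sigma_finite_measure "Pi\<^sub>M I D'"
    by (rule prob_space_imp_sigma_finite[OF prob_space_PiM[OF D'_prob]])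
  interpret Dk: prob_space "D k" using D I by simp
  have PiM_eq: "Pi\<^sub>M J D = Pi\<^sub>M J D'" if "J \<subseteq> I" for J
    using that by (intro PiM_cong) (auto simp: D'_def)
  let ?J = "I - {k}"
  have I_eq: "insert k ?J = I" using I by auto
  have D'_k: "D' k = D k" using I by (simp add: D'_def)
  note M_eq = PiM_eq[OF order_refl]
  have slice: "(\<integral>\<^sup>+s. g (u, s) \<partial>Pi\<^sub>M I D') = (\<integral>\<^sup>+s. \<integral>\<^sup>+z. g (u, s(k := z)) \<partial>D k \<partial>Pi\<^sub>M ?J D')"
    if g: "g \<in> borel_measurable (P0 \<Otimes>\<^sub>M Pi\<^sub>M I D)" and u: "u \<in> space P0" for g u
  proof -
    have "(\<lambda>s. g (u, s)) \<in> borel_measurable (Pi\<^sub>M (insert k ?J) D')"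
      using measurable_Pair2[OF g u] M_eq I_eq by simp
    from product_nn_integral_insert[OF _ _ this] I_eq D'_k I(1) show ?thesis by simp
  qed
  have f_sample: "(\<lambda>\<omega>. f \<omega> (snd \<omega> k)) \<in> borel_measurable (P0 \<Otimes>\<^sub>M Pi\<^sub>M I D)"
    using measurable_comp[OF _ f, of "\<lambda>\<omega>. (\<omega>, snd \<omega> k)"] I by (simp add: comp_def) measurable
  have f_mean: "(\<lambda>\<omega>. \<integral>\<^sup>+z. f \<omega> z \<partial>D k) \<in> borel_measurable (P0 \<Otimes>\<^sub>M Pi\<^sub>M I D)"
    using Dk.borel_measurable_nn_integral_fst[OF f] by simp
  have "(\<integral>\<^sup>+\<omega>. f \<omega> (snd \<omega> k) \<partial>(P0 \<Otimes>\<^sub>M Pi\<^sub>M I D)) = (\<integral>\<^sup>+u. \<integral>\<^sup>+s. f (u, s) (s k) \<partial>Pi\<^sub>M I D' \<partial>P0)"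
    using Pi.nn_integral_fst[of "\<lambda>\<omega>. f \<omega> (snd \<omega> k)" P0] f_sample M_eq by simp
  also have "\<dots> = (\<integral>\<^sup>+u. \<integral>\<^sup>+s. \<integral>\<^sup>+z. f (u, s) z \<partial>D k \<partial>Pi\<^sub>M ?J D' \<partial>P0)"
    using slice[OF f_sample] f_indep by (intro nn_integral_cong) simp
  also have "\<dots> = (\<integral>\<^sup>+u. \<integral>\<^sup>+s. \<integral>\<^sup>+z. f (u, s) z \<partial>D k \<partial>Pi\<^sub>M I D' \<partial>P0)"
    using slice[OF f_mean] f_indep by (intro nn_integral_cong) (simp add: Dk.emeasure_space_1)
  also have "\<dots> = (\<integral>\<^sup>+\<omega>. \<integral>\<^sup>+z. f \<omega> z \<partial>D k \<partial>(P0 \<Otimes>\<^sub>M Pi\<^sub>M I D))"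
    using Pi.nn_integral_fst[of "\<lambda>\<omega>. \<integral>\<^sup>+z. f \<omega> z \<partial>D k" P0] f_mean M_eq by simp
  finally show ?thesis .
qed

lemma hist_loc_eq_sum:
  "hist_loc g \<gamma> m s y h = y - \<gamma> *\<^sub>R (\<Sum>k<h. m * g (hist_loc g \<gamma> m s y k) (s k))"
  by (induction h) (simp_all add: algebra_simps)

lemma hist_loc_cong:
  assumes "\<And>k. k < h \<Longrightarrow> s k = s' k"
  shows "hist_loc g \<gamma> m s y h = hist_loc g \<gamma> m s' y h"
  using assms by (induction h) auto

lemma hist_bar_cong:
  assumes "\<And>i e' k. e' < e \<Longrightarrow> \<xi> i e' k = \<xi>' i e' k"
  shows "hist_bar g \<gamma> H C p \<xi> x0 e j = hist_bar g \<gamma> H C p \<xi>' x0 e j"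
  using assms
proof (induction e arbitrary: j)
  case (Suc e)
  then have "\<xi> i e = \<xi>' i e" for i by auto
  with Suc show ?case by simp
qed simp

lemma norm_mult_mask_lipschitz_power2_le:
  fixes G :: "real^'d \<Rightarrow> real^'d"
  assumes m: "binary_mask m" and G: "\<And>x y. norm (G x - G y) \<le> L * norm (x - y)"
  shows "(norm (m * G x))\<^sup>2 \<le> 3 * ((L * norm (y - x))\<^sup>2 + (L * norm (z - y))\<^sup>2 + (norm (G z))\<^sup>2)"
proof -
  have "norm (m * G x) \<le> norm (G x - G y) + norm (G y - G z) + norm (G z)"
    using norm_mult_binary_mask_le[OF m, of "G x"] norm_triangle_ineq[of "G x - G y" "G y - G z"]
      norm_triangle_ineq[of "G x - G z" "G z"] by simp
  also have "\<dots> \<le> L * norm (y - x) + L * norm (z - y) + norm (G z)"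
    using G[of x y] G[of y z] by (simp add: norm_minus_commute)
  finally show ?thesis
    by (meson norm_ge_zero order_trans power2_add3_le power_mono)
qed

lemma hist_loc_deviation_le:
  fixes g :: "real^'d \<Rightarrow> 'b \<Rightarrow> real^'d" and G :: "real^'d \<Rightarrow> real^'d"
    and \<gamma> :: real and s :: "nat \<Rightarrow> 'b" and y z :: "real^'d"
  assumes m: "binary_mask m" and G: "\<And>x y. norm (G x - G y) \<le> L * norm (x - y)"
  defines "x \<equiv> hist_loc g \<gamma> m s y"
  shows "(norm (y - x h))\<^sup>2 \<le> 2 * \<gamma>\<^sup>2 * (norm (\<Sum>k<h. m * (g (x k) (s k) - G (x k))))\<^sup>2
     + 6 * \<gamma>\<^sup>2 * L\<^sup>2 * real h * (\<Sum>k<h. (norm (y - x k))\<^sup>2)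
     + 6 * \<gamma>\<^sup>2 * (real h)\<^sup>2 * (L\<^sup>2 * (norm (z - y))\<^sup>2 + (norm (G z))\<^sup>2)"
proof -
  define noise where "noise = (\<Sum>k<h. m * (g (x k) (s k) - G (x k)))"
  define drift where "drift = (\<Sum>k<h. m * G (x k))"
  have "x h = y - \<gamma> *\<^sub>R (\<Sum>k<h. m * g (x k) (s k))"
    unfolding x_def by (rule hist_loc_eq_sum)
  then have dev: "y - x h = \<gamma> *\<^sub>R (noise + drift)"
    by (simp add: noise_def drift_def sum.distrib[symmetric] algebra_simps)
  have "(norm drift)\<^sup>2 \<le> real h * (\<Sum>k<h. (norm (m * G (x k)))\<^sup>2)"
    unfolding drift_def using norm_sum_power2_le[of "\<lambda>k. m * G (x k)" "{..<h}"] by simp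
  also have "\<dots> \<le> real h * (\<Sum>k<h. 3 * ((L * norm (y - x k))\<^sup>2 + (L * norm (z - y))\<^sup>2 + (norm (G z))\<^sup>2))"
    by (intro mult_left_mono sum_mono norm_mult_mask_lipschitz_power2_le[OF m G]) auto
  also have "\<dots> = 3 * L\<^sup>2 * real h * (\<Sum>k<h. (norm (y - x k))\<^sup>2)
      + 3 * (real h)\<^sup>2 * (L\<^sup>2 * (norm (z - y))\<^sup>2 + (norm (G z))\<^sup>2)"
    by (simp add: sum.distrib sum_distrib_left power_mult_distrib power2_eq_square algebra_simps)
  finally have drift_le: "(norm drift)\<^sup>2 \<le> \<dots>" .
  have "(norm (y - x h))\<^sup>2 = \<gamma>\<^sup>2 * (norm (noise + drift))\<^sup>2"
    by (simp add: dev power_mult_distrib)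
  also have "\<dots> \<le> \<gamma>\<^sup>2 * (2 * (norm noise)\<^sup>2 + 2 * (norm drift)\<^sup>2)"
    by (intro mult_left_mono norm_add_power2_le) auto
  also have "\<dots> \<le> \<gamma>\<^sup>2 * (2 * (norm noise)\<^sup>2 + 2 * (3 * L\<^sup>2 * real h * (\<Sum>k<h. (norm (y - x k))\<^sup>2)
      + 3 * (real h)\<^sup>2 * (L\<^sup>2 * (norm (z - y))\<^sup>2 + (norm (G z))\<^sup>2)))"
    using drift_le by (intro mult_left_mono add_left_mono) auto
  finally show ?thesis by (simp add: noise_def algebra_simps)
qed

(* An outcome of a round is the state at its start (global model and masks, law P0) together
   with one independent sample for every client i, epoch e and local step h. *)
type_synonym ('o, 'b) round_outcome = "'o \<times> (nat \<times> nat \<times> nat \<Rightarrow> 'b)"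

locale hist_round =
  fixes N E H :: nat and C :: "nat \<Rightarrow> nat set" and D :: "nat \<Rightarrow> 'b measure"
    and gl :: "real^'d \<Rightarrow> 'b \<Rightarrow> real^'d" and gF :: "nat \<Rightarrow> real^'d \<Rightarrow> real^'d"
    and \<gamma> L \<sigma> \<delta>\<^sub>1 \<delta>\<^sub>2 :: real and P0 :: "'o measure" and x0 :: "'o \<Rightarrow> real^'d"
    and p :: "'o \<Rightarrow> nat \<Rightarrow> real^'d"
  assumes N: "N \<ge> 1"
    and C_fin: "\<And>j. j \<in> {1..N} \<Longrightarrow> finite (C j)"
    and C_ne: "\<And>j. j \<in> {1..N} \<Longrightarrow> C j \<noteq> {}"
    and D_prob: "\<And>j i. j \<in> {1..N} \<Longrightarrow> i \<in> C j \<Longrightarrow> prob_space (D i)"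
    and gl_meas: "\<And>j i. j \<in> {1..N} \<Longrightarrow> i \<in> C j \<Longrightarrow>
      (\<lambda>(x, z). gl x z) \<in> borel_measurable (borel \<Otimes>\<^sub>M D i)"
    and A2_lip: "\<And>j i x y. j \<in> {1..N} \<Longrightarrow> i \<in> C j \<Longrightarrow> norm (gF i x - gF i y) \<le> L * norm (x - y)"
    and A3: "\<And>j i x. j \<in> {1..N} \<Longrightarrow> i \<in> C j \<Longrightarrow>
      integrable (D i) (\<lambda>z. gl x z) \<and> (\<integral>z. gl x z \<partial>D i) = gF i x"
    and A4: "\<And>j i x. j \<in> {1..N} \<Longrightarrow> i \<in> C j \<Longrightarrow>
      (\<integral>\<^sup>+z. ennreal ((norm (gl x z - gF i x))\<^sup>2) \<partial>D i) \<le> ennreal (\<sigma>\<^sup>2)"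
    and A5: "\<And>x. (1 / real N) * (\<Sum>j\<in>{1..N}. (norm (grad_fj gF C j x - grad_f gF C N x))\<^sup>2) \<le> \<delta>\<^sub>1\<^sup>2"
    and A6: "\<And>j x. j \<in> {1..N} \<Longrightarrow>
      (1 / real (card (C j))) * (\<Sum>i\<in>C j. (norm (gF i x - grad_fj gF C j x))\<^sup>2) \<le> \<delta>\<^sub>2\<^sup>2"
    and P0_prob: "prob_space P0"
    and x0_meas: "x0 \<in> borel_measurable P0"
    and p_meas: "\<And>j. (\<lambda>\<omega>. p \<omega> j) \<in> borel_measurable P0"
    and p_binary: "\<And>\<omega> j. j \<in> {1..N} \<Longrightarrow> binary_mask (p \<omega> j)"
    and L_nonneg: "0 \<le> L"
    and step_size: "15 * (\<gamma> * real H * L)\<^sup>2 \<le> 1"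
begin

definition Cl :: "nat set"
  where "Cl = (\<Union>j\<in>{1..N}. C j)"

definition I :: "(nat \<times> nat \<times> nat) set"
  where "I = {(i, e, h). i \<in> Cl \<and> e < E \<and> h < H}"

definition M :: "('o, 'b) round_outcome measure"
  where "M = P0 \<Otimes>\<^sub>M (\<Pi>\<^sub>M k\<in>I. D (fst k))"

definition \<xi> :: "('o, 'b) round_outcome \<Rightarrow> nat \<Rightarrow> nat \<Rightarrow> nat \<Rightarrow> 'b"
  where "\<xi> = (\<lambda>\<omega> i e h. snd \<omega> (i, e, h))"

definition xbar :: "nat \<Rightarrow> nat \<Rightarrow> ('o, 'b) round_outcome \<Rightarrow> real^'d"
  where "xbar e j \<omega> = hist_bar gl \<gamma> H C (p (fst \<omega>)) (\<xi> \<omega>) (x0 (fst \<omega>)) e j"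

definition xloc :: "nat \<Rightarrow> nat \<Rightarrow> nat \<Rightarrow> nat \<Rightarrow> ('o, 'b) round_outcome \<Rightarrow> real^'d"
  where "xloc j i e h \<omega> = hist_x gl \<gamma> H C (p (fst \<omega>)) (\<xi> \<omega>) (x0 (fst \<omega>)) j i e h"

definition xhat :: "nat \<Rightarrow> ('o, 'b) round_outcome \<Rightarrow> real^'d"
  where "xhat e \<omega> = hist_hat gl \<gamma> H C (p (fst \<omega>)) (\<xi> \<omega>) (x0 (fst \<omega>)) N e"

definition noise :: "nat \<Rightarrow> nat \<Rightarrow> nat \<Rightarrow> nat \<Rightarrow> ('o, 'b) round_outcome \<Rightarrow> real^'d"
  where "noise j i e h \<omega> =
    (\<Sum>k<h. p (fst \<omega>) j * (gl (xloc j i e k \<omega>) (\<xi> \<omega> i e k) - gF i (xloc j i e k \<omega>)))"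

definition local_dev :: "nat \<Rightarrow> nat \<Rightarrow> nat \<Rightarrow> nat \<Rightarrow> ennreal"
  where "local_dev j i e h = (\<integral>\<^sup>+\<omega>. ennreal ((norm (xbar e j \<omega> - xloc j i e h \<omega>))\<^sup>2) \<partial>M)"

definition cell_dev :: "nat \<Rightarrow> nat \<Rightarrow> ennreal"
  where "cell_dev j e = (\<integral>\<^sup>+\<omega>. ennreal ((norm (xhat e \<omega> - xbar e j \<omega>))\<^sup>2) \<partial>M)"

definition grad_F_sq :: "nat \<Rightarrow> nat \<Rightarrow> ennreal"
  where "grad_F_sq i e = (\<integral>\<^sup>+\<omega>. ennreal ((norm (gF i (xhat e \<omega>)))\<^sup>2) \<partial>M)"

definition grad_f_sq :: "nat \<Rightarrow> ennreal"
  where "grad_f_sq e = (\<integral>\<^sup>+\<omega>. ennreal ((norm (grad_f gF C N (xhat e \<omega>)))\<^sup>2) \<partial>M)"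

lemma xloc_eq: "xloc j i e h \<omega> = hist_loc gl \<gamma> (p (fst \<omega>) j) (\<xi> \<omega> i e) (xbar e j \<omega>) h"
  by (simp add: xloc_def xbar_def hist_x_def)

lemma sample_in_I: "j \<in> {1..N} \<Longrightarrow> i \<in> C j \<Longrightarrow> e < E \<Longrightarrow> h < H \<Longrightarrow> (i, e, h) \<in> I"
  by (auto simp: I_def Cl_def)

lemma finite_I: "finite I"
proof -
  have "I \<subseteq> Cl \<times> {..<E} \<times> {..<H}" by (auto simp: I_def)
  moreover have "finite Cl" using C_fin by (simp add: Cl_def)
  ultimately show ?thesis by (simp add: finite_subset)
qed

lemma prob_space_sample: "k \<in> I \<Longrightarrow> prob_space (D (fst k))"
  using D_prob by (auto simp: I_def Cl_def)

lemma prob_space_M: "prob_space M"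
  unfolding M_def using P0_prob prob_space_sample by (intro prob_space_pair prob_space_PiM)

lemma measurable_sample:
  assumes "(i, e, h) \<in> I"
  shows "(\<lambda>\<omega>. \<xi> \<omega> i e h) \<in> M \<rightarrow>\<^sub>M D i"
proof -
  have "(\<lambda>\<omega>. snd \<omega> (i, e, h)) \<in> M \<rightarrow>\<^sub>M D (fst (i, e, h))"
    unfolding M_def using assms by measurable
  then show ?thesis by (simp add: \<xi>_def)
qed

lemma measurable_gl:
  assumes "j \<in> {1..N}" "i \<in> C j" "X \<in> borel_measurable K" "Z \<in> K \<rightarrow>\<^sub>M D i"
  shows "(\<lambda>\<omega>. gl (X \<omega>) (Z \<omega>)) \<in> borel_measurable K"
  using measurable_comp[OF measurable_Pair[OF assms(3,4)] gl_meas[OF assms(1,2)]]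
  by (simp add: comp_def)

lemma measurable_gF:
  assumes "j \<in> {1..N}" "i \<in> C j" "X \<in> borel_measurable K"
  shows "(\<lambda>\<omega>. gF i (X \<omega>)) \<in> borel_measurable K"
proof -
  have "continuous_on UNIV (gF i)"
    using A2_lip[OF assms(1,2)] L_nonneg
    by (intro lipschitz_on_continuous_on[of L]) (auto simp: lipschitz_on_def dist_norm)
  from measurable_comp[OF assms(3) borel_measurable_continuous_onI[OF this]] show ?thesis
    by (simp add: comp_def)
qed

lemma measurable_mask [measurable]: "(\<lambda>\<omega>. p (fst \<omega>) j) \<in> borel_measurable M"
  unfolding M_def using p_meas by measurable

lemma measurable_x0 [measurable]: "(\<lambda>\<omega>. x0 (fst \<omega>)) \<in> borel_measurable M"
  unfolding M_def using x0_meas by measurable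

lemma measurable_hist_loc:
  assumes j: "j \<in> {1..N}" and i: "i \<in> C j" and e: "e < E" and Y: "Y \<in> borel_measurable M"
  shows "h \<le> H \<Longrightarrow> (\<lambda>\<omega>. hist_loc gl \<gamma> (p (fst \<omega>) j) (\<xi> \<omega> i e) (Y \<omega>) h) \<in> borel_measurable M"
proof (induction h)
  case (Suc h)
  have "(\<lambda>\<omega>. gl (hist_loc gl \<gamma> (p (fst \<omega>) j) (\<xi> \<omega> i e) (Y \<omega>) h) (\<xi> \<omega> i e h)) \<in> borel_measurable M"
    using Suc j i e by (intro measurable_gl[OF j i] measurable_sample sample_in_I) auto
  with Suc show ?case by simp measurable
qed (simp add: Y)

lemma measurable_xbar [measurable]: "e \<le> E \<Longrightarrow> j \<in> {1..N} \<Longrightarrow> xbar e j \<in> borel_measurable M"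
proof (induction e arbitrary: j)
  case 0
  show ?case unfolding xbar_def[abs_def] hist_bar.simps by measurable
next
  case (Suc e)
  have "(\<lambda>\<omega>. hist_loc gl \<gamma> (p (fst \<omega>) j) (\<xi> \<omega> i e) (xbar e j \<omega>) H) \<in> borel_measurable M"
    if "i \<in> C j" for i
    using Suc that by (intro measurable_hist_loc) auto
  moreover have "xbar (Suc e) j = (\<lambda>\<omega>. (1 / real (card (C j))) *\<^sub>R
      (\<Sum>i\<in>C j. hist_loc gl \<gamma> (p (fst \<omega>) j) (\<xi> \<omega> i e) (xbar e j \<omega>) H))"
    by (simp add: fun_eq_iff xbar_def)
  ultimately show ?case by (simp add: borel_measurable_sum)
qed

lemma measurable_xloc [measurable]:
  "j \<in> {1..N} \<Longrightarrow> i \<in> C j \<Longrightarrow> e < E \<Longrightarrow> h \<le> H \<Longrightarrow> xloc j i e h \<in> borel_measurable M"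
  unfolding xloc_eq[abs_def] by (intro measurable_hist_loc) auto

lemma measurable_xhat [measurable]: "e \<le> E \<Longrightarrow> xhat e \<in> borel_measurable M"
  unfolding xhat_def hist_hat_def xbar_def[symmetric] by measurable

lemma xbar_resample: "xbar e j (u, s((i, e, h) := z)) = xbar e j (u, s)"
  unfolding xbar_def by (auto simp: \<xi>_def intro: hist_bar_cong)

lemma xloc_resample: "k \<le> h \<Longrightarrow> xloc j i e k (u, s((i, e, h) := z)) = xloc j i e k (u, s)"
  unfolding xloc_eq xbar_resample by (auto simp: \<xi>_def intro: hist_loc_cong)

lemma noise_resample: "k \<le> h \<Longrightarrow> noise j i e k (u, s((i, e, h) := z)) = noise j i e k (u, s)"
  unfolding noise_def using xloc_resample[of _ h] by (intro sum.cong) (auto simp: \<xi>_def)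

lemma measurable_noise [measurable]:
  assumes j: "j \<in> {1..N}" and i: "i \<in> C j" and e: "e < E" and h: "h \<le> H"
  shows "noise j i e h \<in> borel_measurable M"
proof -
  have "(\<lambda>\<omega>. gl (xloc j i e k \<omega>) (\<xi> \<omega> i e k)) \<in> borel_measurable M"
    and "(\<lambda>\<omega>. gF i (xloc j i e k \<omega>)) \<in> borel_measurable M" if "k < h" for k
    using that assms
    by (auto intro!: measurable_gl[OF j i] measurable_gF[OF j i] measurable_sample sample_in_I)
  then show ?thesis
    unfolding noise_def[abs_def] by (intro borel_measurable_sum borel_measurable_mult_vec) auto
qed

lemma sample_noise_centered:
  assumes "j \<in> {1..N}" "i \<in> C j"
  shows "integrable (D i) (\<lambda>z. gl x z - gF i x)" "(\<integral>z. gl x z - gF i x \<partial>D i) = 0"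
proof -
  interpret prob_space "D i" using D_prob[OF assms] .
  show "integrable (D i) (\<lambda>z. gl x z - gF i x)" using A3[OF assms] by simp
  then show "(\<integral>z. gl x z - gF i x \<partial>D i) = 0" using A3[OF assms] by (simp add: prob_space)
qed

lemma noise_second_moment:
  assumes j: "j \<in> {1..N}" and i: "i \<in> C j" and e: "e < E"
  shows "h \<le> H \<Longrightarrow> (\<integral>\<^sup>+\<omega>. ennreal ((norm (noise j i e h \<omega>))\<^sup>2) \<partial>M) \<le> ennreal (real h * \<sigma>\<^sup>2)"
proof (induction h)
  case 0
  then show ?case by (simp add: noise_def)
next
  case (Suc h)
  interpret M: prob_space M by (rule prob_space_M)
  have k: "(i, e, h) \<in> I" using Suc.prems j i e by (intro sample_in_I) auto
  define f where "f \<omega> z = ennreal ((norm (noise j i e h \<omega>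
    + p (fst \<omega>) j * (gl (xloc j i e h \<omega>) z - gF i (xloc j i e h \<omega>))))\<^sup>2)" for \<omega> z
  note [measurable] = measurable_noise[OF j i e] measurable_xloc[OF j i e]
  have "(\<lambda>\<omega>. gl (xloc j i e h (fst \<omega>)) (snd \<omega>)) \<in> borel_measurable (M \<Otimes>\<^sub>M D i)"
    and "(\<lambda>\<omega>. gF i (xloc j i e h (fst \<omega>))) \<in> borel_measurable (M \<Otimes>\<^sub>M D i)"
    using Suc.prems by (auto intro!: measurable_gl[OF j i] measurable_gF[OF j i])
  then have f_meas: "case_prod f \<in> borel_measurable (M \<Otimes>\<^sub>M D (fst (i, e, h)))"
    unfolding f_def split_beta' using Suc.prems by simp measurable
  have f_resample: "f (u, s((i, e, h) := z')) z = f (u, s) z" for u s z z'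
    unfolding f_def using noise_resample[of h h] xloc_resample[of h h] by simp
  have "(\<integral>\<^sup>+\<omega>. ennreal ((norm (noise j i e (Suc h) \<omega>))\<^sup>2) \<partial>M) = (\<integral>\<^sup>+\<omega>. f \<omega> (snd \<omega> (i, e, h)) \<partial>M)"
    unfolding f_def noise_def by (simp add: \<xi>_def)
  also have "\<dots> = (\<integral>\<^sup>+\<omega>. \<integral>\<^sup>+z. f \<omega> z \<partial>D i \<partial>M)"
    using nn_integral_fresh_coordinate[OF finite_I k prob_space_sample f_meas[unfolded M_def] f_resample]
    by (simp add: M_def)
  also have "\<dots> \<le> (\<integral>\<^sup>+\<omega>. ennreal ((norm (noise j i e h \<omega>))\<^sup>2 + \<sigma>\<^sup>2) \<partial>M)"
    unfolding f_def
    by (intro nn_integral_mono nn_integral_norm_add_masked_noise_le D_prob[OF j i] p_binary[OF j]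
        sample_noise_centered[OF j i] A4[OF j i])
  also have "\<dots> = (\<integral>\<^sup>+\<omega>. ennreal ((norm (noise j i e h \<omega>))\<^sup>2) \<partial>M) + ennreal (\<sigma>\<^sup>2)"
    using Suc.prems by (simp add: nn_integral_add M.emeasure_space_1)
  also have "\<dots> \<le> ennreal (real h * \<sigma>\<^sup>2) + ennreal (\<sigma>\<^sup>2)"
    using Suc by (intro add_right_mono) auto
  also have "\<dots> = ennreal (real (Suc h) * \<sigma>\<^sup>2)"
    by (simp add: algebra_simps flip: ennreal_plus)
  finally show ?case .
qed

lemma dev_pointwise_le:
  assumes j: "j \<in> {1..N}" and i: "i \<in> C j"
  shows "ennreal ((norm (xbar e j \<omega> - xloc j i e h \<omega>))\<^sup>2)
    \<le> ennreal (2 * \<gamma>\<^sup>2) * ennreal ((norm (noise j i e h \<omega>))\<^sup>2)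
      + ennreal (6 * \<gamma>\<^sup>2 * L\<^sup>2 * real h) * (\<Sum>k<h. ennreal ((norm (xbar e j \<omega> - xloc j i e k \<omega>))\<^sup>2))
      + ennreal (6 * \<gamma>\<^sup>2 * (real h)\<^sup>2) * (ennreal (L\<^sup>2) * ennreal ((norm (xhat e \<omega> - xbar e j \<omega>))\<^sup>2)
        + ennreal ((norm (gF i (xhat e \<omega>)))\<^sup>2))"
proof -
  have ennreal_lincomb: "ennreal x \<le> ennreal a * ennreal u + ennreal b * (\<Sum>k<h. ennreal (v k))
      + ennreal c * (ennreal d * ennreal w + ennreal z)"
    if "x \<le> a * u + b * (\<Sum>k<h. v k) + c * (d * w + z)" and "0 \<le> a" "0 \<le> u" "0 \<le> b"
      "\<And>k. 0 \<le> v k" "0 \<le> c" "0 \<le> d" "0 \<le> w" "0 \<le> z" for x a u b v c d w z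
  proof -
    have "ennreal x \<le> ennreal (a * u + b * (\<Sum>k<h. v k) + c * (d * w + z))"
      using that(1) by (rule ennreal_leI)
    also have "\<dots> = ennreal a * ennreal u + ennreal b * (\<Sum>k<h. ennreal (v k))
        + ennreal c * (ennreal d * ennreal w + ennreal z)"
      using that(2-) by (simp add: ennreal_mult sum_nonneg)
    finally show ?thesis .
  qed
  have "(norm (xbar e j \<omega> - xloc j i e h \<omega>))\<^sup>2 \<le> 2 * \<gamma>\<^sup>2 * (norm (noise j i e h \<omega>))\<^sup>2
      + 6 * \<gamma>\<^sup>2 * L\<^sup>2 * real h * (\<Sum>k<h. (norm (xbar e j \<omega> - xloc j i e k \<omega>))\<^sup>2)
      + 6 * \<gamma>\<^sup>2 * (real h)\<^sup>2 * (L\<^sup>2 * (norm (xhat e \<omega> - xbar e j \<omega>))\<^sup>2 + (norm (gF i (xhat e \<omega>)))\<^sup>2)"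
    unfolding xloc_eq noise_def by (rule hist_loc_deviation_le[OF p_binary[OF j] A2_lip[OF j i]])
  then show ?thesis by (rule ennreal_lincomb) auto
qed

lemma local_dev_le:
  assumes j: "j \<in> {1..N}" and i: "i \<in> C j" and e: "e < E" and h: "h \<le> H"
  shows "local_dev j i e h \<le> ennreal (2 * \<gamma>\<^sup>2) * (\<integral>\<^sup>+\<omega>. ennreal ((norm (noise j i e h \<omega>))\<^sup>2) \<partial>M)
      + ennreal (6 * \<gamma>\<^sup>2 * L\<^sup>2 * real h) * (\<Sum>k<h. local_dev j i e k)
      + ennreal (6 * \<gamma>\<^sup>2 * (real h)\<^sup>2) * (ennreal (L\<^sup>2) * cell_dev j e + grad_F_sq i e)"
proof -
  let ?dev = "\<lambda>k \<omega>. ennreal ((norm (xbar e j \<omega> - xloc j i e k \<omega>))\<^sup>2)"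
  have [measurable]: "xbar e j \<in> borel_measurable M" "xhat e \<in> borel_measurable M"
    "(\<lambda>\<omega>. gF i (xhat e \<omega>)) \<in> borel_measurable M" "noise j i e h \<in> borel_measurable M"
    using j i e h by (auto intro: measurable_gF[OF j i])
  have dev_meas: "?dev k \<in> borel_measurable M" if "k \<in> {..<h}" for k
  proof -
    have [measurable]: "xloc j i e k \<in> borel_measurable M"
      using that j i e h by (intro measurable_xloc) auto
    show ?thesis by measurable
  qed
  then have sum_meas: "(\<lambda>\<omega>. \<Sum>k<h. ?dev k \<omega>) \<in> borel_measurable M"
    by (rule borel_measurable_sum)
  have "local_dev j i e h \<le> (\<integral>\<^sup>+\<omega>. ennreal (2 * \<gamma>\<^sup>2) * ennreal ((norm (noise j i e h \<omega>))\<^sup>2)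
      + ennreal (6 * \<gamma>\<^sup>2 * L\<^sup>2 * real h) * (\<Sum>k<h. ?dev k \<omega>)
      + ennreal (6 * \<gamma>\<^sup>2 * (real h)\<^sup>2) * (ennreal (L\<^sup>2) * ennreal ((norm (xhat e \<omega> - xbar e j \<omega>))\<^sup>2)
        + ennreal ((norm (gF i (xhat e \<omega>)))\<^sup>2)) \<partial>M)"
    unfolding local_dev_def by (intro nn_integral_mono dev_pointwise_le[OF j i])
  also have "\<dots> = ennreal (2 * \<gamma>\<^sup>2) * (\<integral>\<^sup>+\<omega>. ennreal ((norm (noise j i e h \<omega>))\<^sup>2) \<partial>M)
      + ennreal (6 * \<gamma>\<^sup>2 * L\<^sup>2 * real h) * (\<Sum>k<h. local_dev j i e k)
      + ennreal (6 * \<gamma>\<^sup>2 * (real h)\<^sup>2) * (ennreal (L\<^sup>2) * cell_dev j e + grad_F_sq i e)"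
  proof -
    have "(\<lambda>\<omega>. ennreal (6 * \<gamma>\<^sup>2 * L\<^sup>2 * real h) * (\<Sum>k<h. ?dev k \<omega>)) \<in> borel_measurable M"
      using sum_meas by measurable
    moreover have "(\<integral>\<^sup>+\<omega>. ennreal (6 * \<gamma>\<^sup>2 * L\<^sup>2 * real h) * (\<Sum>k<h. ?dev k \<omega>) \<partial>M)
        = ennreal (6 * \<gamma>\<^sup>2 * L\<^sup>2 * real h) * (\<Sum>k<h. local_dev j i e k)"
      using sum_meas dev_meas unfolding local_dev_def by (simp only: nn_integral_cmult nn_integral_sum)
    ultimately show ?thesis
      unfolding cell_dev_def grad_F_sq_def by (simp add: nn_integral_add nn_integral_cmult)
  qed
  finally show ?thesis .
qed

lemma local_dev_recursion:
  assumes j: "j \<in> {1..N}" and i: "i \<in> C j" and e: "e < E" and h: "h \<le> H"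
  shows "local_dev j i e h \<le> of_nat h * (ennreal (2 * \<gamma>\<^sup>2 * \<sigma>\<^sup>2)
      + ennreal (6 * \<gamma>\<^sup>2 * real H) * (ennreal (L\<^sup>2) * cell_dev j e + grad_F_sq i e))
    + ennreal (6 * \<gamma>\<^sup>2 * L\<^sup>2 * real h) * (\<Sum>k<h. local_dev j i e k)"
proof -
  have "real h * (6 * \<gamma>\<^sup>2 * real h) \<le> real h * (6 * \<gamma>\<^sup>2 * real H)"
    using h by (intro mult_left_mono) auto
  then have "6 * \<gamma>\<^sup>2 * (real h)\<^sup>2 \<le> real h * (6 * \<gamma>\<^sup>2 * real H)"
    by (simp add: power2_eq_square mult_ac)
  then have h_le: "ennreal (6 * \<gamma>\<^sup>2 * (real h)\<^sup>2) \<le> of_nat h * ennreal (6 * \<gamma>\<^sup>2 * real H)"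
    by (simp add: ennreal_of_nat_eq_real_of_nat flip: ennreal_mult)
  have noise: "ennreal (2 * \<gamma>\<^sup>2) * ennreal (real h * \<sigma>\<^sup>2) = of_nat h * ennreal (2 * \<gamma>\<^sup>2 * \<sigma>\<^sup>2)"
    by (simp add: ennreal_of_nat_eq_real_of_nat mult_ac flip: ennreal_mult)
  have "local_dev j i e h \<le> ennreal (2 * \<gamma>\<^sup>2) * ennreal (real h * \<sigma>\<^sup>2)
      + ennreal (6 * \<gamma>\<^sup>2 * L\<^sup>2 * real h) * (\<Sum>k<h. local_dev j i e k)
      + of_nat h * ennreal (6 * \<gamma>\<^sup>2 * real H) * (ennreal (L\<^sup>2) * cell_dev j e + grad_F_sq i e)"
    using local_dev_le[OF j i e h]
    by (rule order_trans) (intro add_mono mult_left_mono mult_right_mono order_refl h_le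
        noise_second_moment[OF j i e h]; simp)
  also have "\<dots> = of_nat h * (ennreal (2 * \<gamma>\<^sup>2 * \<sigma>\<^sup>2)
      + ennreal (6 * \<gamma>\<^sup>2 * real H) * (ennreal (L\<^sup>2) * cell_dev j e + grad_F_sq i e))
    + ennreal (6 * \<gamma>\<^sup>2 * L\<^sup>2 * real h) * (\<Sum>k<h. local_dev j i e k)"
    unfolding noise by (simp add: algebra_simps)
  finally show ?thesis .
qed

lemma mean_local_dev_le:
  assumes j: "j \<in> {1..N}" and i: "i \<in> C j" and e: "e < E"
  shows "ennreal (1 / real H) * (\<Sum>h<H. local_dev j i e h)
    \<le> ennreal (2 * \<gamma>\<^sup>2 * real H * \<sigma>\<^sup>2) + ennreal (5 * \<gamma>\<^sup>2 * (real H)\<^sup>2 * L\<^sup>2) * cell_dev j e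
      + ennreal (5 * \<gamma>\<^sup>2 * (real H)\<^sup>2) * grad_F_sq i e"
proof -
  let ?a = "ennreal (L\<^sup>2) * cell_dev j e + grad_F_sq i e"
  have "ennreal (1 / real H) * (\<Sum>h<H. local_dev j i e h)
      \<le> ennreal (5 / 8 * real H) * (ennreal (2 * \<gamma>\<^sup>2 * \<sigma>\<^sup>2) + ennreal (6 * \<gamma>\<^sup>2 * real H) * ?a)"
  proof (rule mean_bound_of_recursion)
    show "5 * (6 * \<gamma>\<^sup>2 * L\<^sup>2) * (real H)\<^sup>2 \<le> 2"
      using step_size by (simp add: power_mult_distrib mult_ac)
  qed (use local_dev_recursion[OF j i e] in \<open>simp_all add: mult.commute\<close>)
  also have "\<dots> = ennreal (5 / 8 * real H) * ennreal (2 * \<gamma>\<^sup>2 * \<sigma>\<^sup>2)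
      + ennreal (5 / 8 * real H) * ennreal (6 * \<gamma>\<^sup>2 * real H) * ?a"
    by (simp only: distrib_left mult.assoc)
  also have "\<dots> \<le> ennreal (2 * \<gamma>\<^sup>2 * real H * \<sigma>\<^sup>2) + ennreal (5 * \<gamma>\<^sup>2 * (real H)\<^sup>2) * ?a"
  proof (intro add_mono mult_right_mono ennreal_mult_le)
    show "5 / 8 * real H * (2 * \<gamma>\<^sup>2 * \<sigma>\<^sup>2) \<le> 2 * \<gamma>\<^sup>2 * real H * \<sigma>\<^sup>2"
      using mult_right_mono[of "5 / 4" 2 "\<gamma>\<^sup>2 * real H * \<sigma>\<^sup>2"] by (simp add: mult_ac)
    have "0 \<le> \<gamma>\<^sup>2 * (real H)\<^sup>2" by simp
    then show "5 / 8 * real H * (6 * \<gamma>\<^sup>2 * real H) \<le> 5 * \<gamma>\<^sup>2 * (real H)\<^sup>2"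
      using mult_right_mono[of "15 / 4" 5 "\<gamma>\<^sup>2 * (real H)\<^sup>2"] by (simp add: mult_ac power2_eq_square)
  qed auto
  also have "\<dots> = ennreal (2 * \<gamma>\<^sup>2 * real H * \<sigma>\<^sup>2) + ennreal (5 * \<gamma>\<^sup>2 * (real H)\<^sup>2 * L\<^sup>2) * cell_dev j e
      + ennreal (5 * \<gamma>\<^sup>2 * (real H)\<^sup>2) * grad_F_sq i e"
    by (simp add: distrib_left mult.assoc ennreal_mult)
  finally show ?thesis .
qed

lemma sum_cell_mean_grad_F_sq_eq:
  assumes e: "e \<le> E"
  shows "(\<Sum>j\<in>{1..N}. ennreal (1 / real (card (C j))) * (\<Sum>i\<in>C j. grad_F_sq i e))
    = (\<integral>\<^sup>+\<omega>. ennreal (\<Sum>j\<in>{1..N}. (1 / real (card (C j))) *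
        (\<Sum>i\<in>C j. (norm (gF i (xhat e \<omega>)))\<^sup>2)) \<partial>M)"
proof -
  let ?g = "\<lambda>i \<omega>. ennreal ((norm (gF i (xhat e \<omega>)))\<^sup>2)"
  let ?cell = "\<lambda>j \<omega>. ennreal (1 / real (card (C j))) * (\<Sum>i\<in>C j. ?g i \<omega>)"
  have g_meas: "?g i \<in> borel_measurable M" if "j \<in> {1..N}" "i \<in> C j" for j i
    using measurable_gF[OF that measurable_xhat[OF e]] by measurable
  then have sum_meas: "(\<lambda>\<omega>. \<Sum>i\<in>C j. ?g i \<omega>) \<in> borel_measurable M" if "j \<in> {1..N}" for j
    using that by (intro borel_measurable_sum) auto
  have "(\<Sum>j\<in>{1..N}. ennreal (1 / real (card (C j))) * (\<Sum>i\<in>C j. grad_F_sq i e))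
      = (\<Sum>j\<in>{1..N}. \<integral>\<^sup>+\<omega>. ?cell j \<omega> \<partial>M)"
  proof (rule sum.cong[OF refl])
    fix j assume j: "j \<in> {1..N}"
    have "(\<Sum>i\<in>C j. grad_F_sq i e) = (\<integral>\<^sup>+\<omega>. (\<Sum>i\<in>C j. ?g i \<omega>) \<partial>M)"
      unfolding grad_F_sq_def by (rule nn_integral_sum[symmetric]) (rule g_meas[OF j])
    with sum_meas[OF j] show "ennreal (1 / real (card (C j))) * (\<Sum>i\<in>C j. grad_F_sq i e)
        = (\<integral>\<^sup>+\<omega>. ?cell j \<omega> \<partial>M)"
      by (simp only: nn_integral_cmult)
  qed
  also have "\<dots> = (\<integral>\<^sup>+\<omega>. (\<Sum>j\<in>{1..N}. ?cell j \<omega>) \<partial>M)"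
    using sum_meas by (intro nn_integral_sum[symmetric] borel_measurable_times_ennreal) auto
  also have "\<dots> = (\<integral>\<^sup>+\<omega>. ennreal (\<Sum>j\<in>{1..N}. (1 / real (card (C j))) *
      (\<Sum>i\<in>C j. (norm (gF i (xhat e \<omega>)))\<^sup>2)) \<partial>M)"
    by (intro nn_integral_cong) (simp add: sum_nonneg flip: ennreal_mult)
  finally show ?thesis .
qed

lemma sum_cell_mean_grad_F_sq_le:
  assumes e: "e \<le> E"
  shows "(\<Sum>j\<in>{1..N}. ennreal (1 / real (card (C j))) * (\<Sum>i\<in>C j. grad_F_sq i e))
    \<le> ennreal (real N) * grad_f_sq e + ennreal (real N * (\<delta>\<^sub>1\<^sup>2 + \<delta>\<^sub>2\<^sup>2))"
proof -
  interpret M: prob_space M by (rule prob_space_M)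
  have grad_f_meas: "(\<lambda>\<omega>. grad_f gF C N (xhat e \<omega>)) \<in> borel_measurable M"
    unfolding grad_f_def grad_fj_def
    by (intro borel_measurable_scaleR borel_measurable_const borel_measurable_sum
        measurable_gF[OF _ _ measurable_xhat[OF e]]) auto
  have "(\<Sum>j\<in>{1..N}. ennreal (1 / real (card (C j))) * (\<Sum>i\<in>C j. grad_F_sq i e))
      \<le> (\<integral>\<^sup>+\<omega>. ennreal (real N * (norm (grad_f gF C N (xhat e \<omega>)))\<^sup>2
        + real N * (\<delta>\<^sub>1\<^sup>2 + \<delta>\<^sub>2\<^sup>2)) \<partial>M)"
    unfolding sum_cell_mean_grad_F_sq_eq[OF e] using N C_fin C_ne A5 A6
    by (intro nn_integral_mono ennreal_leI sum_cell_mean_power2_grad_le) auto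
  also have "\<dots> = ennreal (real N) * grad_f_sq e + ennreal (real N * (\<delta>\<^sub>1\<^sup>2 + \<delta>\<^sub>2\<^sup>2))"
    unfolding grad_f_sq_def using grad_f_meas
    by (simp add: nn_integral_add nn_integral_cmult M.emeasure_space_1 ennreal_mult)
  finally show ?thesis .
qed

lemma cell_mean_local_dev_le:
  assumes j: "j \<in> {1..N}" and e: "e < E"
  shows "ennreal (1 / real (card (C j))) * (\<Sum>i\<in>C j. ennreal (1 / real H) * (\<Sum>h<H. local_dev j i e h))
    \<le> ennreal (2 * \<gamma>\<^sup>2 * real H * \<sigma>\<^sup>2) + ennreal (5 * \<gamma>\<^sup>2 * (real H)\<^sup>2 * L\<^sup>2) * cell_dev j e
      + ennreal (5 * \<gamma>\<^sup>2 * (real H)\<^sup>2) * (ennreal (1 / real (card (C j))) * (\<Sum>i\<in>C j. grad_F_sq i e))"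
proof -
  let ?A = "ennreal (2 * \<gamma>\<^sup>2 * real H * \<sigma>\<^sup>2) + ennreal (5 * \<gamma>\<^sup>2 * (real H)\<^sup>2 * L\<^sup>2) * cell_dev j e"
  have card_inv: "ennreal (1 / real (card (C j))) * of_nat (card (C j)) = 1"
    using C_fin[OF j] C_ne[OF j]
    by (simp add: card_gt_0_iff ennreal_of_nat_eq_real_of_nat flip: ennreal_mult)
  have "ennreal (1 / real (card (C j))) * (\<Sum>i\<in>C j. ennreal (1 / real H) * (\<Sum>h<H. local_dev j i e h))
      \<le> ennreal (1 / real (card (C j))) * (\<Sum>i\<in>C j. ?A + ennreal (5 * \<gamma>\<^sup>2 * (real H)\<^sup>2) * grad_F_sq i e)"
    by (intro mult_left_mono sum_mono mean_local_dev_le[OF j _ e]) auto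
  also have "\<dots> = (ennreal (1 / real (card (C j))) * of_nat (card (C j))) * ?A
      + ennreal (5 * \<gamma>\<^sup>2 * (real H)\<^sup>2) * (ennreal (1 / real (card (C j))) * (\<Sum>i\<in>C j. grad_F_sq i e))"
    by (simp add: sum.distrib sum_distrib_left algebra_simps)
  finally show ?thesis by (simp add: card_inv)
qed

lemma sum_local_dev_le:
  "(\<Sum>j\<in>{1..N}. ennreal (1 / real (card (C j))) *
      (\<Sum>i\<in>C j. ennreal (1 / real H) * (\<Sum>e<E. \<Sum>h<H. local_dev j i e h)))
   \<le> of_nat N * (of_nat E * ennreal (2 * \<gamma>\<^sup>2 * real H * \<sigma>\<^sup>2))
     + ennreal (5 * \<gamma>\<^sup>2 * (real H)\<^sup>2 * L\<^sup>2) * (\<Sum>j\<in>{1..N}. \<Sum>e<E. cell_dev j e)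
     + ennreal (5 * \<gamma>\<^sup>2 * (real H)\<^sup>2) *
       (\<Sum>e<E. \<Sum>j\<in>{1..N}. ennreal (1 / real (card (C j))) * (\<Sum>i\<in>C j. grad_F_sq i e))"
proof -
  define A where "A = ennreal (2 * \<gamma>\<^sup>2 * real H * \<sigma>\<^sup>2)"
  define B where "B = ennreal (5 * \<gamma>\<^sup>2 * (real H)\<^sup>2 * L\<^sup>2)"
  define K where "K = ennreal (5 * \<gamma>\<^sup>2 * (real H)\<^sup>2)"
  define W where "W j e = ennreal (1 / real (card (C j))) * (\<Sum>i\<in>C j. grad_F_sq i e)" for j e
  have "(\<Sum>j\<in>{1..N}. ennreal (1 / real (card (C j))) *
      (\<Sum>i\<in>C j. ennreal (1 / real H) * (\<Sum>e<E. \<Sum>h<H. local_dev j i e h)))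
    = (\<Sum>j\<in>{1..N}. \<Sum>e<E. ennreal (1 / real (card (C j))) *
      (\<Sum>i\<in>C j. ennreal (1 / real H) * (\<Sum>h<H. local_dev j i e h)))"
    by (simp add: sum_distrib_left sum.swap[of _ "C _"])
  also have "\<dots> \<le> (\<Sum>j\<in>{1..N}. \<Sum>e<E. A + B * cell_dev j e + K * W j e)"
    unfolding A_def B_def K_def W_def by (intro sum_mono cell_mean_local_dev_le) auto
  also have "\<dots> = of_nat N * (of_nat E * A) + B * (\<Sum>j\<in>{1..N}. \<Sum>e<E. cell_dev j e)
      + K * (\<Sum>j\<in>{1..N}. \<Sum>e<E. W j e)"
    by (simp add: sum.distrib sum_distrib_left)
  also have "\<dots> = of_nat N * (of_nat E * A) + B * (\<Sum>j\<in>{1..N}. \<Sum>e<E. cell_dev j e)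
      + K * (\<Sum>e<E. \<Sum>j\<in>{1..N}. W j e)"
    by (simp only: sum.swap[of W "{..<E}" "{1..N}"])
  finally show ?thesis unfolding A_def B_def K_def W_def .
qed

lemma deviation_bound:
  "(\<Sum>j\<in>{1..N}. ennreal (1 / real (card (C j))) *
      (\<Sum>i\<in>C j. ennreal (1 / real H) * (\<Sum>e<E. \<Sum>h<H. local_dev j i e h)))
   \<le> ennreal (5 * \<gamma>\<^sup>2 * (real H)\<^sup>2 * L\<^sup>2) * (\<Sum>j\<in>{1..N}. \<Sum>e<E. cell_dev j e)
     + ennreal (5 * \<gamma>\<^sup>2 * real N * (real H)\<^sup>2) * (\<Sum>e<E. grad_f_sq e)
     + ennreal (2 * \<gamma>\<^sup>2 * real N * real H * real E * \<sigma>\<^sup>2)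
     + ennreal (5 * \<gamma>\<^sup>2 * real N * (real H)\<^sup>2 * real E * \<delta>\<^sub>2\<^sup>2)
     + ennreal (5 * \<gamma>\<^sup>2 * real N * (real H)\<^sup>2 * real E * \<delta>\<^sub>1\<^sup>2)"
  (is "_ \<le> ?B * ?cells + ?K' * ?grads + ?A' + ?\<Delta>\<^sub>2 + ?\<Delta>\<^sub>1")
proof -
  define K where "K = ennreal (5 * \<gamma>\<^sup>2 * (real H)\<^sup>2)"
  define \<Delta> where "\<Delta> = ennreal (real N * (\<delta>\<^sub>1\<^sup>2 + \<delta>\<^sub>2\<^sup>2))"
  have "(\<Sum>j\<in>{1..N}. ennreal (1 / real (card (C j))) *
      (\<Sum>i\<in>C j. ennreal (1 / real H) * (\<Sum>e<E. \<Sum>h<H. local_dev j i e h)))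
    \<le> of_nat N * (of_nat E * ennreal (2 * \<gamma>\<^sup>2 * real H * \<sigma>\<^sup>2)) + ?B * ?cells
      + K * (\<Sum>e<E. \<Sum>j\<in>{1..N}. ennreal (1 / real (card (C j))) * (\<Sum>i\<in>C j. grad_F_sq i e))"
    unfolding K_def by (rule sum_local_dev_le)
  also have "\<dots> \<le> of_nat N * (of_nat E * ennreal (2 * \<gamma>\<^sup>2 * real H * \<sigma>\<^sup>2)) + ?B * ?cells
      + K * (\<Sum>e<E. ennreal (real N) * grad_f_sq e + \<Delta>)"
    unfolding \<Delta>_def by (intro add_left_mono mult_left_mono sum_mono sum_cell_mean_grad_F_sq_le) auto
  also have "\<dots> = ?B * ?cells + ?K' * ?grads + ?A' + ?\<Delta>\<^sub>2 + ?\<Delta>\<^sub>1"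
  proof -
    have "K * (\<Sum>e<E. ennreal (real N) * grad_f_sq e + \<Delta>)
        = K * ennreal (real N) * ?grads + K * (of_nat E * \<Delta>)"
      by (simp add: sum.distrib sum_distrib_left distrib_left mult_ac)
    moreover have "K * ennreal (real N) = ?K'"
      unfolding K_def by (simp add: mult_ac flip: ennreal_mult)
    moreover have "of_nat N * (of_nat E * ennreal (2 * \<gamma>\<^sup>2 * real H * \<sigma>\<^sup>2)) = ?A'"
      by (simp add: ennreal_of_nat_eq_real_of_nat mult_ac flip: ennreal_mult)
    moreover have "K * (of_nat E * \<Delta>) = ?\<Delta>\<^sub>2 + ?\<Delta>\<^sub>1"
      unfolding K_def \<Delta>_def
      by (simp add: ennreal_of_nat_eq_real_of_nat algebra_simps flip: ennreal_mult ennreal_plus)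
    ultimately show ?thesis by (simp add: add_ac)
  qed
  finally show ?thesis .
qed

end

theorem lemma4:
  fixes N E H :: nat
    and C :: "nat \<Rightarrow> nat set"
    and D :: "nat \<Rightarrow> 'b measure"
    and l :: "real^'d \<Rightarrow> 'b \<Rightarrow> real"
    and gl :: "real^'d \<Rightarrow> 'b \<Rightarrow> real^'d"
    and F :: "nat \<Rightarrow> real^'d \<Rightarrow> real"
    and gF :: "nat \<Rightarrow> real^'d \<Rightarrow> real^'d"
    and \<gamma> L \<sigma> \<delta>\<^sub>1 \<delta>\<^sub>2 :: real
    and P0 :: "'o measure"
    and x0 :: "'o \<Rightarrow> real^'d"
    and p :: "'o \<Rightarrow> nat \<Rightarrow> real^'d"
  defines "Cl \<equiv> (\<Union>j\<in>{1..N}. C j)"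
  defines "I \<equiv> {(i, e, h). i \<in> Cl \<and> e < E \<and> h < H}"
  defines "M \<equiv> P0 \<Otimes>\<^sub>M (\<Pi>\<^sub>M k\<in>I. D (fst k))"
  defines "\<xi> \<equiv> (\<lambda>\<omega> :: 'o \<times> (nat \<times> nat \<times> nat \<Rightarrow> 'b). \<lambda>i e h. snd \<omega> (i, e, h))"
  \<comment> \<open>cells, clients, round lengths\<close>
  assumes N: "N \<ge> 1" and E: "E \<ge> 1" and H: "H \<ge> 1"
    and C_fin: "\<And>j. j \<in> {1..N} \<Longrightarrow> finite (C j)"
    and C_ne: "\<And>j. j \<in> {1..N} \<Longrightarrow> C j \<noteq> {}"
    and C_disj: "\<And>j j'. j \<in> {1..N} \<Longrightarrow> j' \<in> {1..N} \<Longrightarrow> j \<noteq> j' \<Longrightarrow> C j \<inter> C j' = {}"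
  \<comment> \<open>client distributions, losses, stochastic gradients\<close>
    and D_prob: "\<And>i. i \<in> Cl \<Longrightarrow> prob_space (D i)"
    and l_grad: "\<And>x \<xi>'. ((\<lambda>y. l y \<xi>') has_derivative (\<lambda>v. gl x \<xi>' \<bullet> v)) (at x)"
    and gl_meas: "\<And>i. i \<in> Cl \<Longrightarrow> (\<lambda>(x, \<xi>'). gl x \<xi>') \<in> borel_measurable (borel \<Otimes>\<^sub>M D i)"
    and F_def: "\<And>i x. i \<in> Cl \<Longrightarrow> F i x = (\<integral>\<xi>'. l x \<xi>' \<partial>D i)"
  \<comment> \<open>(A2)\<close>
    and A2_diff: "\<And>i x. i \<in> Cl \<Longrightarrow> ((F i) has_derivative (\<lambda>v. gF i x \<bullet> v)) (at x)"
    and A2_lip: "\<And>i x y. i \<in> Cl \<Longrightarrow> norm (gF i x - gF i y) \<le> L * norm (x - y)"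
    and A2_smooth: "\<And>i x y. i \<in> Cl \<Longrightarrow> F i y \<le> F i x + gF i x \<bullet> (y - x) + L / 2 * (norm (y - x))\<^sup>2"
  \<comment> \<open>(A3)\<close>
    and A3: "\<And>i x. i \<in> Cl \<Longrightarrow> integrable (D i) (\<lambda>\<xi>'. gl x \<xi>') \<and> (\<integral>\<xi>'. gl x \<xi>' \<partial>D i) = gF i x"
  \<comment> \<open>(A4)\<close>
    and A4: "\<And>i x. i \<in> Cl \<Longrightarrow> (\<integral>\<^sup>+\<xi>'. ennreal ((norm (gl x \<xi>' - gF i x))\<^sup>2) \<partial>D i) \<le> ennreal (\<sigma>\<^sup>2)"
  \<comment> \<open>(A5)\<close>
    and A5: "\<And>x. (1 / real N) * (\<Sum>j\<in>{1..N}. (norm (grad_fj gF C j x - grad_f gF C N x))\<^sup>2) \<le> \<delta>\<^sub>1\<^sup>2"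
  \<comment> \<open>(A6)\<close>
    and A6: "\<And>j x. j \<in> {1..N} \<Longrightarrow>
       (1 / real (card (C j))) * (\<Sum>i\<in>C j. (norm (gF i x - grad_fj gF C j x))\<^sup>2) \<le> \<delta>\<^sub>2\<^sup>2"
  \<comment> \<open>state at the start of round t (global model and masks), independent of the fresh samples\<close>
    and P0_prob: "prob_space P0"
    and x0_meas: "x0 \<in> borel_measurable P0"
    and p_meas: "\<And>j. (\<lambda>\<omega>. p \<omega> j) \<in> borel_measurable P0"
    and p_binary: "\<And>\<omega> j k. j \<in> {1..N} \<Longrightarrow> p \<omega> j $ k \<in> {0, 1}"
    and p_disj: "\<And>\<omega> j j'. j \<in> {1..N} \<Longrightarrow> j' \<in> {1..N} \<Longrightarrow> j \<noteq> j' \<Longrightarrow> p \<omega> j * p \<omega> j' = 0"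
    and p_sum: "\<And>\<omega>. (\<Sum>j\<in>{1..N}. p \<omega> j) = 1"
  \<comment> \<open>step size\<close>
    and \<gamma>_pos: "\<gamma> > 0" and L_pos: "L > 0"
    and \<gamma>_le: "\<gamma> \<le> 1 / (sqrt 15 * real H * L)"
  shows
   "(\<Sum>j\<in>{1..N}. ennreal (1 / real (card (C j))) * (\<Sum>i\<in>C j. ennreal (1 / real H) *
       (\<Sum>e<E. \<Sum>h<H. \<integral>\<^sup>+\<omega>. ennreal ((norm (
          hist_bar gl \<gamma> H C (p (fst \<omega>)) (\<xi> \<omega>) (x0 (fst \<omega>)) e j
        - hist_x gl \<gamma> H C (p (fst \<omega>)) (\<xi> \<omega>) (x0 (fst \<omega>)) j i e h))\<^sup>2) \<partial>M)))
    \<le> ennreal (5 * \<gamma>\<^sup>2 * (real H)\<^sup>2 * L\<^sup>2) *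
       (\<Sum>j\<in>{1..N}. \<Sum>e<E. \<integral>\<^sup>+\<omega>. ennreal ((norm (
          hist_hat gl \<gamma> H C (p (fst \<omega>)) (\<xi> \<omega>) (x0 (fst \<omega>)) N e
        - hist_bar gl \<gamma> H C (p (fst \<omega>)) (\<xi> \<omega>) (x0 (fst \<omega>)) e j))\<^sup>2) \<partial>M)
     + ennreal (5 * \<gamma>\<^sup>2 * real N * (real H)\<^sup>2) *
       (\<Sum>e<E. \<integral>\<^sup>+\<omega>. ennreal ((norm (grad_f gF C N
          (hist_hat gl \<gamma> H C (p (fst \<omega>)) (\<xi> \<omega>) (x0 (fst \<omega>)) N e)))\<^sup>2) \<partial>M)
     + ennreal (2 * \<gamma>\<^sup>2 * real N * real H * real E * \<sigma>\<^sup>2)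
     + ennreal (5 * \<gamma>\<^sup>2 * real N * (real H)\<^sup>2 * real E * \<delta>\<^sub>2\<^sup>2)
     + ennreal (5 * \<gamma>\<^sup>2 * real N * (real H)\<^sup>2 * real E * \<delta>\<^sub>1\<^sup>2)"
proof -
  have step_size: "15 * (\<gamma> * real H * L)\<^sup>2 \<le> 1"
  proof -
    have pos: "0 < sqrt 15 * real H * L" using H L_pos by simp
    then have "\<gamma> * (sqrt 15 * real H * L) \<le> 1" using \<gamma>_le by (simp add: field_simps)
    then have "(\<gamma> * (sqrt 15 * real H * L))\<^sup>2 \<le> 1"
      using \<gamma>_pos pos by (intro power_le_one) auto
    then show ?thesis by (simp add: power_mult_distrib mult_ac)
  qed
  interpret hist: hist_round N E H C D gl gF \<gamma> L \<sigma> \<delta>\<^sub>1 \<delta>\<^sub>2 P0 x0 p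
  proof (rule hist_round.intro)
    fix j i assume "j \<in> {1..N}" "i \<in> C j"
    then have i: "i \<in> Cl" by (auto simp: Cl_def)
    show "prob_space (D i)" by (rule D_prob[OF i])
    show "(\<lambda>(x, z). gl x z) \<in> borel_measurable (borel \<Otimes>\<^sub>M D i)" by (rule gl_meas[OF i])
    show "norm (gF i x - gF i y) \<le> L * norm (x - y)" for x y by (rule A2_lip[OF i])
    show "integrable (D i) (\<lambda>z. gl x z) \<and> (\<integral>z. gl x z \<partial>D i) = gF i x" for x by (rule A3[OF i])
    show "(\<integral>\<^sup>+z. ennreal ((norm (gl x z - gF i x))\<^sup>2) \<partial>D i) \<le> ennreal (\<sigma>\<^sup>2)" for x
      by (rule A4[OF i])
  next
    show "binary_mask (p \<omega> j)" if "j \<in> {1..N}" for \<omega> j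
      using p_binary[OF that] by (simp add: binary_mask_def)
  qed (fact N C_fin C_ne A5 A6 P0_prob x0_meas p_meas step_size less_imp_le[OF L_pos])+
  show ?thesis
    using hist.deviation_bound
    unfolding hist.local_dev_def hist.cell_dev_def hist.grad_f_sq_def hist.xbar_def hist.xloc_def
      hist.xhat_def hist.M_def hist.\<xi>_def hist.I_def hist.Cl_def M_def \<xi>_def I_def Cl_def .
qed

end
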